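(* Let $\phi=\tilde p/p$ be a rational inner function on $\mathbb{D}^2$ and let $(z_1,z_2)\in\mathbb{D}^2$. Then $$\mathfrak D_{(z_1,z_2)}(\phi)=\frac{1}{4\pi^2}\int_{\mathbb{T}^2}\frac{1-|\phi(\eta_1,z_2)|^2-|\phi(z_1,\eta_2)|^2+|\phi(z_1,z_2)|^2}{|\eta_1-z_1|^2|\eta_2-z_2|^2}|d\eta|.$$
   Context: $\phi=\tilde p/p$ where $p\in\mathbb{C}[z_1,z_2]$ has bidegree $(m,n)$, no zeros in $\mathbb{D}^2$, is atoral, and $\tilde p(z)=z_1^mz_2^n\overline{p(1/\bar z_1,1/\bar z_2)}$. For $f$ holomorphic on $\mathbb{D}^2$ with radial boundary values and a point $(z_1,z_2)\in\overline{\mathbb{D}}^2$, the local Dirichlet integral is $\mathfrak D_{(z_1,z_2)}(f)=\frac{1}{4\pi^2}\int_{\mathbb{T}^2}\frac{|f(z_1,z_2)-f(z_1,\eta_2)-f(\eta_1,z_2)+f(\eta_1,\eta_2)|^2}{|z_1-\eta_1|^2|z_2-\eta_2|^2}|d\eta|$, where values at points with a coordinate on $\mathbb{T}$ are radial limits. *)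

theory Defs
  imports "HOL-Analysis.Analysis"
begin

text \<open>Bivariate complex polynomials are represented by coefficient functions
  c :: nat => nat => complex together with a bidegree (m,n); the polynomial is
  sum over i<=m, j<=n of c i j * z1^i * z2^j.\<close>

definition eval2 :: "(nat \<Rightarrow> nat \<Rightarrow> complex) \<Rightarrow> nat \<Rightarrow> nat \<Rightarrow> complex \<Rightarrow> complex \<Rightarrow> complex" where
  "eval2 c m n z1 z2 = (\<Sum>i\<le>m. \<Sum>j\<le>n. c i j * z1 ^ i * z2 ^ j)"

definition has_bidegree :: "(nat \<Rightarrow> nat \<Rightarrow> complex) \<Rightarrow> nat \<Rightarrow> nat \<Rightarrow> bool" where
  "has_bidegree c m n \<longleftrightarrow> (\<exists>j\<le>n. c m j \<noteq> 0) \<and> (\<exists>i\<le>m. c i n \<noteq> 0)"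

text \<open>Coefficients of the reflection p~(z) = z1^m z2^n conj(p(1/conj z1, 1/conj z2)).\<close>
definition refl2 :: "(nat \<Rightarrow> nat \<Rightarrow> complex) \<Rightarrow> nat \<Rightarrow> nat \<Rightarrow> (nat \<Rightarrow> nat \<Rightarrow> complex)" where
  "refl2 c m n = (\<lambda>i j. cnj (c (m - i) (n - j)))"

definition is_poly2 :: "(complex \<Rightarrow> complex \<Rightarrow> complex) \<Rightarrow> bool" where
  "is_poly2 f \<longleftrightarrow> (\<exists>c N M. \<forall>z1 z2. f z1 z2 = eval2 c N M z1 z2)"

definition atoral :: "(nat \<Rightarrow> nat \<Rightarrow> complex) \<Rightarrow> nat \<Rightarrow> nat \<Rightarrow> bool" where
  "atoral c m n \<longleftrightarrow>
     (\<forall>q r s. is_poly2 q \<and> is_poly2 r \<and> is_poly2 s \<and>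
        (\<forall>z1 z2. eval2 c m n z1 z2 = q z1 z2 * r z1 z2) \<and>
        (\<forall>z1 z2. eval2 (refl2 c m n) m n z1 z2 = q z1 z2 * s z1 z2)
        \<longrightarrow> (\<exists>k. \<forall>z1 z2. q z1 z2 = k))"

definition bval :: "(complex \<Rightarrow> complex \<Rightarrow> complex) \<Rightarrow> complex \<Rightarrow> complex \<Rightarrow> complex" where
  "bval f a b = Lim (at_left (1::real))
      (\<lambda>r. f (if norm a < 1 then a else complex_of_real r * a)
             (if norm b < 1 then b else complex_of_real r * b))"

text \<open>Local Dirichlet integral; |d eta| is arc length on T^2, parametrised by
  eta_k = exp(i t_k), t in [0,2 pi]^2.\<close>
definition local_dirichlet :: "(complex \<Rightarrow> complex \<Rightarrow> complex) \<Rightarrow> complex \<Rightarrow> complex \<Rightarrow> real" where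
  "local_dirichlet f z1 z2 = 1 / (4 * pi ^ 2) *
     (LINT t:{0..2*pi} \<times> {0..2*pi}|lborel.
        (let e1 = cis (fst t); e2 = cis (snd t) in
          (cmod (bval f z1 z2 - bval f z1 e2 - bval f e1 z2 + bval f e1 e2))\<^sup>2
          / ((cmod (z1 - e1))\<^sup>2 * (cmod (z2 - e2))\<^sup>2)))"

end

theory Submission
  imports Defs "HOL-Complex_Analysis.Complex_Analysis"
    "HOL-Computational_Algebra.Polynomial_Factorial" "HOL-Computational_Algebra.Field_as_Ring"
begin

(* Write a = phi(z1,z2), B(eta2) = phi(z1,eta2), C(eta1) = phi(eta1,z2), D = phi on the torus and
   E = D - B - C + a, so that the integrand of the local Dirichlet integral is |E|^2 divided by the
   product of the two Poisson-type weights 1/|eta_k - z_k|^2.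
   By Hurwitz's theorem p does not vanish on (disc x circle) and (circle x disc), and atorality
   (through a Bezout identity for p and p~) leaves only finitely many zeros on the torus; off them
   |D| = 1.  Using |D| = 1, the difference of the two integrands splits into three terms, each of
   the form F + conj G in one of the variables with F, G holomorphic in that variable and vanishing
   at the corresponding z_k.  The Poisson formula kills their integrals in that variable, and
   Fubini's theorem concludes. *)

section \<open>Bivariate polynomials as polynomials with polynomial coefficients\<close>

definition poly2 :: "complex poly poly \<Rightarrow> complex \<Rightarrow> complex \<Rightarrow> complex" where
  "poly2 P x y = poly (poly P [:x:]) y"

lemma poly2_add [simp]: "poly2 (P + Q) x y = poly2 P x y + poly2 Q x y"
  by (simp add: poly2_def)

lemma poly2_mult [simp]: "poly2 (P * Q) x y = poly2 P x y * poly2 Q x y"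
  by (simp add: poly2_def)

lemma poly2_const [simp]: "poly2 [:a:] x y = poly a y"
  by (simp add: poly2_def)

lemma poly2_sum: "poly2 (sum f A) x y = (\<Sum>i\<in>A. poly2 (f i) x y)"
  by (simp add: poly2_def poly_sum)

lemma poly2_monom: "poly2 (monom (monom a j) i) x y = a * x ^ i * y ^ j"
  by (simp add: poly2_def poly_monom)

lemma poly2_conv_map_poly: "poly2 P x y = poly (map_poly (\<lambda>a. poly a y) P) x"
  by (induction P) (simp_all add: poly2_def map_poly_pCons)

lemma poly_eq_sum_upto:
  fixes p :: "'a::comm_semiring_1 poly"
  assumes "degree p \<le> N"
  shows "poly p x = (\<Sum>i\<le>N. coeff p i * x ^ i)"
  unfolding poly_altdef
  by (rule sum.mono_neutral_left) (use assms in \<open>auto simp: coeff_eq_0\<close>)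

lemma poly2_eq_sum_upto:
  assumes "degree P \<le> N" "\<And>i. degree (coeff P i) \<le> M"
  shows "poly2 P x y = (\<Sum>i\<le>N. \<Sum>j\<le>M. coeff (coeff P i) j * x ^ i * y ^ j)"
proof -
  have "poly2 P x y = (\<Sum>i\<le>N. poly (coeff P i) y * x ^ i)"
    unfolding poly2_conv_map_poly
    by (subst poly_eq_sum_upto[where N = N])
       (use assms(1) in \<open>auto simp: degree_le coeff_map_poly coeff_eq_0\<close>)
  also have "\<dots> = (\<Sum>i\<le>N. \<Sum>j\<le>M. coeff (coeff P i) j * x ^ i * y ^ j)"
    by (simp add: poly_eq_sum_upto[OF assms(2)] sum_distrib_left sum_distrib_right mult_ac)
  finally show ?thesis .
qed

lemma is_poly2_poly2: "is_poly2 (poly2 P)"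
proof -
  define M where "M = (\<Sum>i\<le>degree P. degree (coeff P i))"
  have "degree (coeff P i) \<le> M" for i
    by (cases "i \<le> degree P") (auto simp: M_def coeff_eq_0 intro: member_le_sum)
  with poly2_eq_sum_upto[OF order.refl] show ?thesis
    unfolding is_poly2_def eval2_def
    by (intro exI[of _ "\<lambda>i j. coeff (coeff P i) j"] exI[of _ "degree P"] exI[of _ M]) simp
qed

definition poly2_of_coeffs :: "(nat \<Rightarrow> nat \<Rightarrow> complex) \<Rightarrow> nat \<Rightarrow> nat \<Rightarrow> complex poly poly" where
  "poly2_of_coeffs c m n = (\<Sum>i\<le>m. \<Sum>j\<le>n. monom (monom (c i j) j) i)"

lemma poly2_poly2_of_coeffs: "poly2 (poly2_of_coeffs c m n) x y = eval2 c m n x y"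
  by (simp add: poly2_of_coeffs_def eval2_def poly2_sum poly2_monom)

lemma coeff_poly2_of_coeffs:
  "coeff (coeff (poly2_of_coeffs c m n) i) j = (if i \<le> m \<and> j \<le> n then c i j else 0)"
proof -
  have "coeff (coeff (poly2_of_coeffs c m n) i) j =
      (\<Sum>i'\<le>m. if i' = i then (\<Sum>j'\<le>n. if j' = j then c i' j' else 0) else 0)"
    unfolding poly2_of_coeffs_def coeff_sum by (intro sum.cong refl) (simp add: coeff_monom coeff_sum)
  thus ?thesis by (simp add: sum.delta')
qed

lemma poly2_of_coeffs_nonzero:
  assumes "has_bidegree c m n"
  shows "poly2_of_coeffs c m n \<noteq> 0"
proof
  obtain j where "j \<le> n" "c m j \<noteq> 0"
    using assms unfolding has_bidegree_def by blast
  moreover assume "poly2_of_coeffs c m n = 0"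
  ultimately show False
    using coeff_poly2_of_coeffs[of c m n m j] by simp
qed

section \<open>Atoral polynomials have finitely many zeros on the torus\<close>

lemma content_1_dvd_of_smult_eq:
  fixes G R W :: "complex poly poly"
  assumes "content G = 1" "l \<noteq> 0" "smult l R = G * W"
  shows "G dvd R"
proof -
  have "normalize l * content R = content W"
    using arg_cong[OF assms(3), of content] assms(1) by (simp add: content_mult)
  hence "l dvd content W" by (metis dvd_triv_left normalize_dvd_iff)
  hence "l dvd coeff W i" for i using content_dvd_coeff dvd_trans by blast
  hence "W = smult l (map_poly (\<lambda>a. a div l) W)"
    by (intro poly_eqI) (simp add: coeff_map_poly dvd_mult_div_cancel)
  with assms(3) have "smult l R = smult l (G * map_poly (\<lambda>a. a div l) W)"
    by (metis mult_smult_right)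
  hence "l * coeff R i = l * coeff (G * map_poly (\<lambda>a. a div l) W) i" for i
    by (metis coeff_smult)
  with assms(2) have "R = G * map_poly (\<lambda>a. a div l) W"
    by (intro poly_eqI) simp
  thus ?thesis by simp
qed

text \<open>Pseudo-division by a combination of least degree leaves a combination of smaller degree,
  which must therefore vanish.\<close>

lemma least_degree_combination_dvd:
  fixes P Q H :: "complex poly poly"
  assumes H: "H = A0 * P + B0 * Q" "H \<noteq> 0"
    and least: "\<And>A B. A * P + B * Q \<noteq> 0 \<Longrightarrow> degree H \<le> degree (A * P + B * Q)"
  shows "primitive_part H dvd A * P + B * Q"
proof -
  define R where "R = A * P + B * Q"
  obtain q r where qr: "pseudo_divmod R H = (q, r)" by fastforce
  define l where "l = coeff H (degree H) ^ (Suc (degree R) - degree H)"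
  have l: "l \<noteq> 0" using H(2) by (simp add: l_def)
  have R: "smult l R = H * q + r" and r: "r = 0 \<or> degree r < degree H"
    using pseudo_divmod[OF H(2) qr] by (auto simp: l_def)
  have "r = smult l R - H * q" using R by simp
  also have "\<dots> = (smult l A - q * A0) * P + (smult l B - q * B0) * Q"
    unfolding R_def H(1) by (simp add: algebra_simps smult_add_right mult_smult_left)
  finally have rr: "r = (smult l A - q * A0) * P + (smult l B - q * B0) * Q" .
  have "r = 0"
  proof (rule ccontr)
    assume "r \<noteq> 0"
    hence "degree H \<le> degree r" using least[of "smult l A - q * A0" "smult l B - q * B0"] rr by simp
    with r \<open>r \<noteq> 0\<close> show False by simp
  qed
  with R have "smult l R = smult (content H) (primitive_part H) * q" by simp
  also have "\<dots> = primitive_part H * smult (content H) q"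
    by (simp only: mult_smult_left mult_smult_right mult.commute)
  finally show ?thesis
    unfolding R_def by (rule content_1_dvd_of_smult_eq[OF content_primitive_part[OF H(2)] l])
qed

lemma poly2_bezout_const:
  fixes P Q :: "complex poly poly"
  assumes "P \<noteq> 0" and coprime: "\<And>H U V. P = H * U \<Longrightarrow> Q = H * V \<Longrightarrow> degree H = 0"
  shows "\<exists>A B D. D \<noteq> 0 \<and> A * P + B * Q = [:D:]"
proof -
  define comb where "comb H \<longleftrightarrow> (\<exists>A B. H = A * P + B * Q) \<and> H \<noteq> 0" for H
  have "P = 1 * P + 0 * Q" by simp
  hence "comb P" unfolding comb_def using assms(1) by blast
  then obtain H where "comb H" and least: "\<And>H'. comb H' \<Longrightarrow> degree H \<le> degree H'"
    using ex_has_least_nat[of comb P degree] by blast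
  then obtain A0 B0 where H: "H = A0 * P + B0 * Q" "H \<noteq> 0" unfolding comb_def by blast
  have "primitive_part H dvd A * P + B * Q" for A B
    by (rule least_degree_combination_dvd[OF H]) (use least in \<open>auto simp: comb_def\<close>)
  from this[of 1 0] this[of 0 1] obtain U V where "P = primitive_part H * U" "Q = primitive_part H * V"
    by (auto elim!: dvdE)
  hence "degree H = 0" using coprime degree_primitive_part by metis
  hence "H = [:coeff H 0:]" by (simp add: degree_0_id)
  moreover from this H(2) have "coeff H 0 \<noteq> 0" by (metis pCons_0_0)
  ultimately show ?thesis using H(1) by metis
qed

lemma atoral_no_common_factor:
  assumes "atoral c m n"
    and "poly2_of_coeffs c m n = H * U" "poly2_of_coeffs (refl2 c m n) m n = H * V"
  shows "degree H = 0"
proof (rule ccontr)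
  assume deg: "degree H \<noteq> 0"
  have "\<exists>k. \<forall>x y. poly2 H x y = k"
    using assms unfolding atoral_def
    by (elim allE[of _ "poly2 H"] allE[of _ "poly2 U"] allE[of _ "poly2 V"] mp)
       (simp add: is_poly2_poly2 flip: poly2_poly2_of_coeffs)
  then obtain k where k: "\<And>x y. poly2 H x y = k" by blast
  have "lead_coeff H \<noteq> 0" using deg by auto
  then obtain y where y: "poly (lead_coeff H) y \<noteq> 0" using poly_all_0_iff_0 by blast
  define h where "h = map_poly (\<lambda>a. poly a y) H"
  have "degree H \<le> degree h"
    using y by (intro le_degree) (simp add: h_def coeff_map_poly)
  moreover have "h = [:k:]"
    using k[of _ y] by (intro poly_eq_poly_eq_iff[THEN iffD1]) (simp add: h_def poly2_conv_map_poly fun_eq_iff)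
  ultimately show False using deg by simp
qed

text \<open>A Bezout identity \<open>A p + B p~ = D(y)\<close> confines the common zeros of \<open>p\<close> and \<open>p~\<close> to
  finitely many values of the second coordinate.\<close>

lemma atoral_common_zeros:
  assumes "has_bidegree c m n" "atoral c m n"
  obtains D :: "complex poly" where "D \<noteq> 0"
    "\<And>x y. eval2 c m n x y = 0 \<Longrightarrow> eval2 (refl2 c m n) m n x y = 0 \<Longrightarrow> poly D y = 0"
proof -
  obtain A B D where "D \<noteq> 0" and D: "A * poly2_of_coeffs c m n + B * poly2_of_coeffs (refl2 c m n) m n = [:D:]"
    using poly2_bezout_const[OF poly2_of_coeffs_nonzero[OF assms(1)]]
      atoral_no_common_factor[OF assms(2)] by blast
  have eq: "poly2 A x y * eval2 c m n x y + poly2 B x y * eval2 (refl2 c m n) m n x y = poly D y" for x y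
    using arg_cong[OF D, of "\<lambda>X. poly2 X x y"] by (simp add: poly2_poly2_of_coeffs)
  show thesis
  proof (rule that[OF \<open>D \<noteq> 0\<close>])
    fix x y
    assume "eval2 c m n x y = 0" "eval2 (refl2 c m n) m n x y = 0"
    with eq[of x y] show "poly D y = 0" by simp
  qed
qed

definition swap_coeffs :: "(nat \<Rightarrow> nat \<Rightarrow> complex) \<Rightarrow> nat \<Rightarrow> nat \<Rightarrow> complex" where
  "swap_coeffs c i j = c j i"

lemma eval2_swap_coeffs: "eval2 (swap_coeffs c) n m x y = eval2 c m n y x"
  unfolding eval2_def swap_coeffs_def by (subst sum.swap) (simp add: mult_ac)

lemma refl2_swap_coeffs: "refl2 (swap_coeffs c) n m = swap_coeffs (refl2 c m n)"
  by (simp add: refl2_def swap_coeffs_def fun_eq_iff)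

lemma has_bidegree_swap_coeffs: "has_bidegree c m n \<Longrightarrow> has_bidegree (swap_coeffs c) n m"
  unfolding has_bidegree_def swap_coeffs_def by blast

lemma is_poly2_swap:
  assumes "is_poly2 f"
  shows "is_poly2 (\<lambda>x y. f y x)"
proof -
  obtain c N M where "\<And>x y. f x y = eval2 c N M x y"
    using assms unfolding is_poly2_def by blast
  hence "\<And>x y. f y x = eval2 (swap_coeffs c) M N x y" by (simp add: eval2_swap_coeffs)
  thus ?thesis unfolding is_poly2_def by blast
qed

lemma atoral_swap_coeffs:
  assumes "atoral c m n"
  shows "atoral (swap_coeffs c) n m"
  unfolding atoral_def
proof (intro allI impI)
  fix q r s :: "complex \<Rightarrow> complex \<Rightarrow> complex"
  assume qrs: "is_poly2 q \<and> is_poly2 r \<and> is_poly2 s \<and>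
     (\<forall>x y. eval2 (swap_coeffs c) n m x y = q x y * r x y) \<and>
     (\<forall>x y. eval2 (refl2 (swap_coeffs c) n m) n m x y = q x y * s x y)"
  have r: "eval2 c m n x y = q y x * r y x" for x y
    using qrs eval2_swap_coeffs[of c n m y x] by simp
  have s: "eval2 (refl2 c m n) m n x y = q y x * s y x" for x y
    using qrs eval2_swap_coeffs[of "refl2 c m n" n m y x] by (simp add: refl2_swap_coeffs)
  have "\<exists>k. \<forall>x y. q y x = k"
    using assms[unfolded atoral_def, rule_format, of "\<lambda>x y. q y x" "\<lambda>x y. r y x" "\<lambda>x y. s y x"]
      qrs r s by (simp add: is_poly2_swap)
  thus "\<exists>k. \<forall>x y. q x y = k" by blast
qed

lemma unimodular_power_diff:
  fixes x :: complex
  assumes "cmod x = 1" "i \<le> m"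
  shows "x ^ (m - i) = x ^ m * cnj x ^ i"
proof -
  have "x * cnj x = 1" using complex_norm_square[of x] assms(1) by simp
  moreover have "x ^ m = x ^ (m - i) * x ^ i" using assms(2) by (simp flip: power_add)
  ultimately show ?thesis by (simp add: mult.assoc flip: power_mult_distrib)
qed

lemma eval2_refl2_torus:
  assumes x: "cmod x = 1" and y: "cmod y = 1"
  shows "eval2 (refl2 c m n) m n x y = x ^ m * y ^ n * cnj (eval2 c m n x y)"
proof -
  have "eval2 (refl2 c m n) m n x y = (\<Sum>i\<le>m. \<Sum>j\<le>n. cnj (c (m - i) (n - j)) * x ^ i * y ^ j)"
    by (simp add: eval2_def refl2_def)
  also have "\<dots> = (\<Sum>i\<le>m. \<Sum>j\<le>n. cnj (c i (n - j)) * x ^ (m - i) * y ^ j)"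
    by (rule sum.reindex_bij_witness[of _ "\<lambda>i. m - i" "\<lambda>i. m - i"]) auto
  also have "\<dots> = (\<Sum>i\<le>m. \<Sum>j\<le>n. cnj (c i j) * x ^ (m - i) * y ^ (n - j))"
    by (intro sum.cong refl sum.reindex_bij_witness[of _ "\<lambda>i. n - i" "\<lambda>i. n - i"]) auto
  also have "\<dots> = x ^ m * y ^ n * cnj (eval2 c m n x y)"
    by (simp add: eval2_def sum_distrib_left unimodular_power_diff x y mult_ac)
  finally show ?thesis .
qed

lemma finite_zeros_on_torus:
  assumes "has_bidegree c m n" "atoral c m n"
  shows "finite {(x, y). cmod x = 1 \<and> cmod y = 1 \<and> eval2 c m n x y = 0}"
proof -
  obtain D1 :: "complex poly" where "D1 \<noteq> 0" and D1:
    "\<And>x y. eval2 c m n x y = 0 \<Longrightarrow> eval2 (refl2 c m n) m n x y = 0 \<Longrightarrow> poly D1 y = 0"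
    using atoral_common_zeros[OF assms] by blast
  obtain D2 :: "complex poly" where "D2 \<noteq> 0" and D2:
    "\<And>x y. eval2 (swap_coeffs c) n m x y = 0 \<Longrightarrow>
      eval2 (refl2 (swap_coeffs c) n m) n m x y = 0 \<Longrightarrow> poly D2 y = 0"
    using atoral_common_zeros[OF has_bidegree_swap_coeffs[OF assms(1)] atoral_swap_coeffs[OF assms(2)]]
    by blast
  have "poly D2 x = 0 \<and> poly D1 y = 0"
    if "cmod x = 1" "cmod y = 1" "eval2 c m n x y = 0" for x y
    using D1[of x y] D2[of y x] eval2_refl2_torus[OF that(1,2)] that(3)
    by (simp add: eval2_swap_coeffs refl2_swap_coeffs)
  hence "{(x, y). cmod x = 1 \<and> cmod y = 1 \<and> eval2 c m n x y = 0} \<subseteq> {x. poly D2 x = 0} \<times> {y. poly D1 y = 0}"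
    by auto
  moreover have "finite ({x. poly D2 x = 0} \<times> {y. poly D1 y = 0})"
    using \<open>D1 \<noteq> 0\<close> \<open>D2 \<noteq> 0\<close> by (simp add: poly_roots_finite)
  ultimately show ?thesis by (rule finite_subset)
qed

section \<open>Nonvanishing on the disc times the circle\<close>

lemma infinite_unit_circle: "infinite {x::complex. cmod x = 1}"
proof -
  have "{x::complex. cmod x = 1} = sphere 0 1" by (auto simp: dist_norm)
  moreover have "uncountable (sphere (0::complex) 1)"
    by (rule connected_uncountable[of _ 1 "-1"]) (auto simp: connected_sphere_eq)
  ultimately show ?thesis using countable_finite by auto
qed

lemma eval2_not_identically_zero:
  assumes "has_bidegree c m n" "atoral c m n" "cmod e = 1"
  obtains w where "eval2 c m n w e \<noteq> 0"
proof (rule ccontr)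
  assume "\<not> thesis"
  with that have "(\<lambda>x. (x, e)) ` {x. cmod x = 1} \<subseteq> {(x, y). cmod x = 1 \<and> cmod y = 1 \<and> eval2 c m n x y = 0}"
    using assms(3) by auto
  hence "finite ((\<lambda>x. (x, e)) ` {x::complex. cmod x = 1})"
    using finite_zeros_on_torus[OF assms(1,2)] finite_subset by blast
  hence "finite {x::complex. cmod x = 1}"
    by (rule finite_imageD) (auto simp: inj_on_def)
  thus False using infinite_unit_circle by blast
qed

lemma tendsto_eval2 [tendsto_intros]:
  "(f \<longlongrightarrow> x) F \<Longrightarrow> (g \<longlongrightarrow> y) F \<Longrightarrow> ((\<lambda>r. eval2 c m n (f r) (g r)) \<longlongrightarrow> eval2 c m n x y) F"
  unfolding eval2_def by (intro tendsto_intros)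

lemma continuous_on_eval2 [continuous_intros]:
  "continuous_on S f \<Longrightarrow> continuous_on S g \<Longrightarrow> continuous_on S (\<lambda>r. eval2 c m n (f r) (g r))"
  unfolding eval2_def by (intro continuous_intros)

lemma holomorphic_on_eval2 [holomorphic_intros]:
  "f holomorphic_on S \<Longrightarrow> g holomorphic_on S \<Longrightarrow> (\<lambda>w. eval2 c m n (f w) (g w)) holomorphic_on S"
  unfolding eval2_def by (intro holomorphic_intros)

lemma uniform_limit_compact_parameter:
  fixes f :: "'a::metric_space \<Rightarrow> 'b::metric_space \<Rightarrow> 'c::metric_space"
  assumes cont: "continuous_on (K \<times> L) (\<lambda>(w, y). f w y)" and "compact K" "compact L"
    and y: "\<And>k. y k \<in> L" "y \<longlonglongrightarrow> e" and "e \<in> L"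
  shows "uniform_limit K (\<lambda>k w. f w (y k)) (\<lambda>w. f w e) sequentially"
proof (rule uniform_limitI)
  fix \<epsilon> :: real assume "\<epsilon> > 0"
  have "uniformly_continuous_on (K \<times> L) (\<lambda>(w, y). f w y)"
    using assms by (intro compact_uniformly_continuous compact_Times)
  then obtain \<delta> where "\<delta> > 0" and \<delta>: "\<And>u v. u \<in> K \<times> L \<Longrightarrow> v \<in> K \<times> L \<Longrightarrow> dist v u < \<delta> \<Longrightarrow>
      dist ((\<lambda>(w, y). f w y) v) ((\<lambda>(w, y). f w y) u) < \<epsilon>"
    unfolding uniformly_continuous_on_def using \<open>\<epsilon> > 0\<close> by metis
  from y(2) \<open>\<delta> > 0\<close> have "eventually (\<lambda>k. dist (y k) e < \<delta>) sequentially"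
    by (rule tendstoD)
  thus "\<forall>\<^sub>F k in sequentially. \<forall>w\<in>K. dist (f w (y k)) (f w e) < \<epsilon>"
  proof eventually_elim
    case (elim k)
    show ?case
    proof
      fix w assume "w \<in> K"
      thus "dist (f w (y k)) (f w e) < \<epsilon>"
        using \<delta>[of "(w, e)" "(w, y k)"] elim y(1) \<open>e \<in> L\<close> by (simp add: dist_Pair_Pair)
    qed
  qed
qed

text \<open>Hurwitz's theorem, applied to \<open>w \<mapsto> p(w, r e)\<close> as \<open>r \<rightarrow> 1\<close>.\<close>

lemma eval2_nonzero_disc_times_circle:
  assumes nz: "\<And>w1 w2. cmod w1 < 1 \<Longrightarrow> cmod w2 < 1 \<Longrightarrow> eval2 c m n w1 w2 \<noteq> 0"
    and e: "cmod e = 1" and w: "eval2 c m n w e \<noteq> 0" and w0: "cmod w0 < 1"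
  shows "eval2 c m n w0 e \<noteq> 0"
proof (cases "(\<lambda>w. eval2 c m n w e) constant_on ball 0 1")
  case True
  then obtain k where k: "\<And>w. cmod w < 1 \<Longrightarrow> eval2 c m n w e = k"
    unfolding constant_on_def by auto
  define G where "G = map_poly (\<lambda>a. poly a e) (poly2_of_coeffs c m n)"
  have G: "eval2 c m n x e = poly G x" for x
    unfolding G_def by (simp flip: poly2_poly2_of_coeffs poly2_conv_map_poly)
  show ?thesis
  proof
    assume "eval2 c m n w0 e = 0"
    hence "ball 0 1 \<subseteq> {x. poly G x = 0}" using k w0 G by auto
    moreover have "infinite (ball (0::complex) 1)"
      using uncountable_ball[of 1 0] countable_finite by auto
    ultimately have "G = 0" using finite_subset poly_roots_finite by blast
    thus False using w G by simp
  qed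
next
  case False
  define r where "r k = 1 - inverse (real (Suc (Suc k)))" for k
  have r: "0 < r k" "r k < 1" for k by (auto simp: r_def field_simps)
  hence "\<bar>r k\<bar> < 1" for k by (simp add: abs_of_pos)
  have "r \<longlonglongrightarrow> 1"
    unfolding r_def using LIMSEQ_Suc[OF LIMSEQ_inverse_real_of_nat]
    by (auto intro: tendsto_eq_intros)
  hence "(\<lambda>k. of_real (r k) * e) \<longlonglongrightarrow> e"
    by (auto intro: tendsto_eq_intros)
  moreover have "cmod (of_real (r k) * e) \<le> 1" for k
    using r[of k] e by (simp add: norm_mult)
  ultimately have ul: "uniform_limit K (\<lambda>k w. eval2 c m n w (of_real (r k) * e)) (\<lambda>w. eval2 c m n w e)
      sequentially" if "compact K" for K
    using e that by (intro uniform_limit_compact_parameter[where L = "cball 0 1"])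
      (auto intro!: continuous_intros simp: case_prod_unfold)
  show ?thesis
  proof (rule Hurwitz_no_zeros[of "ball 0 1" "\<lambda>k w. eval2 c m n w (of_real (r k) * e)"
      "\<lambda>w. eval2 c m n w e"])
    show "\<And>k w. w \<in> ball 0 1 \<Longrightarrow> eval2 c m n w (of_real (r k) * e) \<noteq> 0"
      using \<open>\<And>k. \<bar>r k\<bar> < 1\<close> e by (intro nz) (auto simp: norm_mult)
  qed (use ul False w0 in \<open>auto intro!: holomorphic_intros\<close>)
qed

section \<open>The Poisson integral on the unit circle\<close>

definition poisson_weight :: "complex \<Rightarrow> real \<Rightarrow> complex" where
  "poisson_weight z t = complex_of_real (1 / (cmod (cis t - z))\<^sup>2)"

definition poisson_mass :: "complex \<Rightarrow> complex" where
  "poisson_mass z = complex_of_real (2 * pi / (1 - (cmod z)\<^sup>2))"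

lemma cnj_poisson_weight [simp]: "cnj (poisson_weight z t) = poisson_weight z t"
  by (simp add: poisson_weight_def)

lemma cnj_poisson_mass [simp]: "cnj (poisson_mass z) = poisson_mass z"
  by (simp add: poisson_mass_def)

lemma cis_minus_nonzero: "cmod z < 1 \<Longrightarrow> cis t - z \<noteq> 0"
  by (metis norm_cis order_less_irrefl right_minus_eq)

lemma continuous_on_poisson_weight [continuous_intros]:
  "cmod z < 1 \<Longrightarrow> continuous_on S f \<Longrightarrow> continuous_on S (\<lambda>x. poisson_weight z (f x))"
  unfolding poisson_weight_def using cis_minus_nonzero by (intro continuous_intros) auto

lemma one_minus_cnj_mult_nonzero:
  fixes z u :: complex
  assumes "cmod z < 1" "cmod u \<le> 1"
  shows "1 - cnj z * u \<noteq> 0"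
proof
  assume "1 - cnj z * u = 0"
  hence "cmod (cnj z * u) = 1" by (metis eq_iff_diff_eq_0 norm_one)
  moreover have "cmod (cnj z * u) < 1"
    using assms by (simp add: norm_mult) (metis mult_le_one norm_ge_zero less_le_trans
      mult_strict_right_mono mult_less_cancel_left1 not_less order_le_less_trans)
  ultimately show False by simp
qed

text \<open>On the circle \<open>1/|e - z|\<^sup>2\<close> is a sum of a Cauchy kernel at \<open>z\<close> and a function holomorphic in \<open>e\<close>.\<close>

lemma poisson_weight_split:
  fixes z :: complex
  assumes z: "cmod z < 1"
  shows "complex_of_real (1 - (cmod z)\<^sup>2) * poisson_weight z t
    = cis t / (cis t - z) + cnj z * cis t / (1 - cnj z * cis t)"
proof -
  define e where "e = cis t"
  have ee: "e * cnj e = 1" using complex_norm_square[of e] by (simp add: e_def)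
  have "e - z \<noteq> 0" "cnj e - cnj z \<noteq> 0" "e \<noteq> 0"
    using cis_minus_nonzero[OF z] by (auto simp: e_def)
  have "1 - cnj z * e = e * (cnj e - cnj z)"
    using ee by (simp add: algebra_simps)
  hence "cnj z * e / (1 - cnj z * e) = cnj z / (cnj e - cnj z)"
    using \<open>e \<noteq> 0\<close> by simp
  also have "e / (e - z) + \<dots> = (1 - z * cnj z) / ((e - z) * (cnj e - cnj z))"
    using \<open>e - z \<noteq> 0\<close> \<open>cnj e - cnj z \<noteq> 0\<close> ee by (simp add: add_frac_eq algebra_simps)
  also have "\<dots> = complex_of_real (1 - (cmod z)\<^sup>2) * poisson_weight z t"
    unfolding poisson_weight_def e_def[symmetric]
    by (simp only: of_real_divide of_real_diff of_real_1 complex_norm_square complex_cnj_diff) simp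
  finally show ?thesis by (simp add: e_def)
qed

lemma has_integral_circlepath:
  assumes "(g has_contour_integral I) (circlepath 0 1)"
  shows "((\<lambda>t. g (cis t) * \<i> * cis t) has_integral I) {0..2 * pi}"
  using assms unfolding circlepath_def
  by (subst (asm) has_contour_integral_part_circlepath_iff) auto

lemma has_integral_mult_left_cancel:
  fixes c :: "'a::real_normed_field"
  assumes "c \<noteq> 0" "((\<lambda>x. c * f x) has_integral c * I) S"
  shows "(f has_integral I) S"
  using has_integral_mult_right[OF assms(2), of "inverse c"] assms(1)
  by (simp add: mult.assoc[symmetric])

text \<open>Proof via the Cauchy integral formula for \<open>f(w)/(w - z)\<close> plus Cauchy's theorem for
  \<open>f(w) conj z/(1 - conj z w)\<close>, written as \<open>h(w)/(w - 0)\<close> with \<open>h(0) = 0\<close>.\<close>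

theorem Poisson_integral_formula:
  fixes f :: "complex \<Rightarrow> complex"
  assumes hol: "f holomorphic_on ball 0 1" and cont: "continuous_on (cball 0 1) f"
    and z: "cmod z < 1"
  shows "(LINT t:{0..2*pi}|lborel. poisson_weight z t * f (cis t)) = poisson_mass z * f z"
proof -
  define h where "h u = u * f u * cnj z / (1 - cnj z * u)" for u
  define c where "c = \<i> * complex_of_real (1 - (cmod z)\<^sup>2)"
  have "(cmod z)\<^sup>2 < 1" using power_strict_mono[of "cmod z" 1 2] z by simp
  hence "c \<noteq> 0" unfolding c_def by (metis less_irrefl mult_eq_0_iff of_real_eq_0_iff right_minus_eq
    complex_i_not_zero)
  have nz: "1 - cnj z * u \<noteq> 0" if "u \<in> cball 0 1" for u
    using one_minus_cnj_mult_nonzero[OF z] that by simp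
  have I: "((\<lambda>t. f (cis t) / (cis t - z) * \<i> * cis t) has_integral 2 * pi * \<i> * f z) {0..2*pi}"
    using has_integral_circlepath[OF Cauchy_integral_circlepath[OF cont hol]] z by simp
  have "h holomorphic_on ball 0 1" "continuous_on (cball 0 1) h"
    unfolding h_def using nz by (auto intro!: holomorphic_intros continuous_intros hol cont)
  hence "((\<lambda>t. h (cis t) / (cis t - 0) * \<i> * cis t) has_integral 0) {0..2*pi}"
    using has_integral_circlepath[OF Cauchy_integral_circlepath[where f = h and z = 0 and r = 1 and w = 0]]
    by (simp add: h_def)
  with I have I_sum: "((\<lambda>t. f (cis t) / (cis t - z) * \<i> * cis t + h (cis t) / (cis t - 0) * \<i> * cis t)
      has_integral 2 * pi * \<i> * f z + 0) {0..2*pi}"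
    by (rule has_integral_add)
  have pointwise: "f (cis t) / (cis t - z) * \<i> * cis t + h (cis t) / (cis t - 0) * \<i> * cis t
      = c * (poisson_weight z t * f (cis t))" for t
  proof -
    have "c * (poisson_weight z t * f (cis t))
        = \<i> * f (cis t) * (complex_of_real (1 - (cmod z)\<^sup>2) * poisson_weight z t)"
      by (simp add: c_def mult_ac)
    also have "\<dots> = \<i> * f (cis t) * (cis t / (cis t - z) + cnj z * cis t / (1 - cnj z * cis t))"
      by (simp only: poisson_weight_split[OF z])
    finally show ?thesis by (simp add: h_def distrib_left mult_ac)
  qed
  have total: "2 * pi * \<i> * f z + 0 = c * (poisson_mass z * f z)"
    using \<open>c \<noteq> 0\<close> by (simp add: c_def poisson_mass_def field_simps)
  have "((\<lambda>t. poisson_weight z t * f (cis t)) has_integral poisson_mass z * f z) {0..2*pi}"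
    using I_sum unfolding pointwise total by (rule has_integral_mult_left_cancel[OF \<open>c \<noteq> 0\<close>])
  moreover have "set_integrable lborel {0..2*pi} (\<lambda>t. poisson_weight z t * f (cis t))"
    unfolding set_integrable_def
    by (rule borel_integrable_compact)
       (auto intro!: continuous_intros continuous_on_compose2[OF cont] z)
  ultimately show ?thesis
    by (simp add: set_borel_integral_eq_integral integral_unique)
qed

lemma set_integral_cnj: "(LINT x:S|M. cnj (f x)) = cnj (LINT x:S|M. (f x :: complex))"
proof -
  have "(\<lambda>x. indicator S x *\<^sub>R cnj (f x)) = (\<lambda>x. cnj (indicator S x *\<^sub>R f x))"
    by (simp add: fun_eq_iff)
  thus ?thesis unfolding set_lebesgue_integral_def by (simp only: Bochner_Integration.integral_cnj)
qed

corollary Poisson_integral_formula_harmonic: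
  fixes F G :: "complex \<Rightarrow> complex"
  assumes "F holomorphic_on ball 0 1" "continuous_on (cball 0 1) F"
    and "G holomorphic_on ball 0 1" "continuous_on (cball 0 1) G" and z: "cmod z < 1"
  shows "(LINT t:{0..2*pi}|lborel. poisson_weight z t * (F (cis t) + cnj (G (cis t))))
    = poisson_mass z * (F z + cnj (G z))"
proof -
  have int: "set_integrable lborel {0..2*pi} h" if "continuous_on {0..2*pi} h" for h :: "real \<Rightarrow> complex"
    unfolding set_integrable_def by (rule borel_integrable_compact) (use that in auto)
  have "(LINT t:{0..2*pi}|lborel. poisson_weight z t * (F (cis t) + cnj (G (cis t))))
      = (LINT t:{0..2*pi}|lborel. poisson_weight z t * F (cis t) + cnj (poisson_weight z t * G (cis t)))"
    by (simp add: distrib_left)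
  also have "\<dots> = (LINT t:{0..2*pi}|lborel. poisson_weight z t * F (cis t))
      + (LINT t:{0..2*pi}|lborel. cnj (poisson_weight z t * G (cis t)))"
    using z by (intro set_integral_add(2) int)
      (auto intro!: continuous_intros continuous_on_compose2[OF assms(2)] continuous_on_compose2[OF assms(4)])
  also have "\<dots> = (LINT t:{0..2*pi}|lborel. poisson_weight z t * F (cis t))
      + cnj (LINT t:{0..2*pi}|lborel. poisson_weight z t * G (cis t))"
    by (simp only: set_integral_cnj)
  also have "\<dots> = poisson_mass z * (F z + cnj (G z))"
    using Poisson_integral_formula assms by (simp add: distrib_left)
  finally show ?thesis .
qed

section \<open>Iterated integrals of bounded functions over products of compact sets\<close>

definition bounded_measurable_on :: "'a::topological_space set \<Rightarrow> ('a \<Rightarrow> complex) \<Rightarrow> bool" where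
  "bounded_measurable_on S g \<longleftrightarrow> g \<in> borel_measurable borel \<and> bounded (g ` S)"

lemma bounded_measurable_on_add:
  "bounded_measurable_on S f \<Longrightarrow> bounded_measurable_on S g \<Longrightarrow> bounded_measurable_on S (\<lambda>x. f x + g x)"
  unfolding bounded_measurable_on_def by (auto intro: bounded_plus_comp)

lemma bounded_measurable_on_diff:
  "bounded_measurable_on S f \<Longrightarrow> bounded_measurable_on S g \<Longrightarrow> bounded_measurable_on S (\<lambda>x. f x - g x)"
  unfolding bounded_measurable_on_def by (auto intro: bounded_minus_comp)

lemma bounded_measurable_on_mult:
  assumes "bounded_measurable_on S f" "bounded_measurable_on S g"
  shows "bounded_measurable_on S (\<lambda>x. f x * g x)"
proof -
  obtain B C where B: "\<And>x. x \<in> S \<Longrightarrow> norm (f x) \<le> B" and C: "\<And>x. x \<in> S \<Longrightarrow> norm (g x) \<le> C"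
    using assms unfolding bounded_measurable_on_def bounded_iff by blast
  have "norm (f x * g x) \<le> B * C" if "x \<in> S" for x
    unfolding norm_mult using B[OF that] C[OF that]
    by (intro mult_mono) (auto intro: order_trans[OF norm_ge_zero])
  thus ?thesis using assms unfolding bounded_measurable_on_def bounded_iff by auto
qed

lemma bounded_measurable_on_cnj:
  assumes "bounded_measurable_on S f"
  shows "bounded_measurable_on S (\<lambda>x. cnj (f x))"
proof -
  have "(\<lambda>x. cnj (f x)) \<in> borel_measurable borel"
    using assms measurable_compose[of f borel borel cnj borel]
    by (simp add: bounded_measurable_on_def borel_measurable_continuous_onI continuous_on_cnj continuous_on_id)
  thus ?thesis using assms unfolding bounded_measurable_on_def bounded_iff by auto
qed

lemma bounded_measurable_on_continuous:
  "continuous_on UNIV g \<Longrightarrow> compact S \<Longrightarrow> bounded_measurable_on S g"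
  unfolding bounded_measurable_on_def
  by (meson borel_measurable_continuous_onI compact_continuous_image compact_imp_bounded
      continuous_on_subset subset_UNIV)

lemma set_integrable_bounded_measurable_on:
  fixes g :: "'a::euclidean_space \<Rightarrow> complex"
  assumes "compact S" "bounded_measurable_on S g"
  shows "set_integrable lborel S g"
proof -
  obtain B where "\<And>x. x \<in> S \<Longrightarrow> norm (g x) \<le> B"
    using assms(2) unfolding bounded_measurable_on_def bounded_iff by blast
  thus ?thesis
    using assms emeasure_bounded_finite[OF compact_imp_bounded[OF assms(1)]]
    unfolding set_integrable_def bounded_measurable_on_def
    by (intro integrableI_bounded_set_indicator[where B = B]) (auto intro: compact_imp_closed borel_closed)
qed

lemma set_integral_Times_iterated:
  fixes g :: "'a::euclidean_space \<times> 'b::euclidean_space \<Rightarrow> complex"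
  assumes "compact A" "compact B" "bounded_measurable_on (A \<times> B) g"
  shows "(LINT t:A \<times> B|lborel. g t) = (LINT x:A|lborel. LINT y:B|lborel. g (x, y))"
    and "(LINT t:A \<times> B|lborel. g t) = (LINT y:B|lborel. LINT x:A|lborel. g (x, y))"
proof -
  define F where "F = (\<lambda>t. indicator (A \<times> B) t *\<^sub>R g t)"
  have Fxy: "F (x, y) = indicator A x *\<^sub>R (indicator B y *\<^sub>R g (x, y))"
    and Fyx: "F (x, y) = indicator B y *\<^sub>R (indicator A x *\<^sub>R g (x, y))" for x y
    by (simp_all add: F_def indicator_times)
  have int: "integrable (lborel \<Otimes>\<^sub>M lborel) F"
    using set_integrable_bounded_measurable_on[OF compact_Times[OF assms(1,2)] assms(3)]
    unfolding set_integrable_def F_def by (simp add: lborel_prod)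
  have LINT: "(LINT t:A \<times> B|lborel. g t) = integral\<^sup>L (lborel \<Otimes>\<^sub>M lborel) F"
    unfolding set_lebesgue_integral_def F_def by (simp add: lborel_prod)
  have "integral\<^sup>L (lborel \<Otimes>\<^sub>M lborel) F = (\<integral>x. (\<integral>y. F (x, y) \<partial>lborel) \<partial>lborel)"
    by (rule lborel_pair.integral_fst'[OF int, symmetric])
  also have "\<dots> = (LINT x:A|lborel. LINT y:B|lborel. g (x, y))"
    unfolding set_lebesgue_integral_def Fxy integral_scaleR_right ..
  finally show "(LINT t:A \<times> B|lborel. g t) = (LINT x:A|lborel. LINT y:B|lborel. g (x, y))"
    unfolding LINT .
  have "integral\<^sup>L (lborel \<Otimes>\<^sub>M lborel) F = (\<integral>y. (\<integral>x. F (x, y) \<partial>lborel) \<partial>lborel)"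
    using lborel_pair.integral_snd[of "\<lambda>x y. F (x, y)"] int by simp
  also have "\<dots> = (LINT y:B|lborel. LINT x:A|lborel. g (x, y))"
    unfolding set_lebesgue_integral_def Fyx integral_scaleR_right ..
  finally show "(LINT t:A \<times> B|lborel. g t) = (LINT y:B|lborel. LINT x:A|lborel. g (x, y))"
    unfolding LINT .
qed

lemma borel_measurable_set_integral_fst:
  fixes g :: "'a::euclidean_space \<times> 'b::euclidean_space \<Rightarrow> complex"
  assumes "g \<in> borel_measurable borel" "A \<in> sets borel"
  shows "(\<lambda>y. LINT x:A|lborel. g (x, y)) \<in> borel_measurable borel"
  unfolding set_lebesgue_integral_def
  using assms lborel.borel_measurable_lebesgue_integral by (simp add: lborel_prod[symmetric])

lemma borel_measurable_set_integral_snd: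
  fixes g :: "'a::euclidean_space \<times> 'b::euclidean_space \<Rightarrow> complex"
  assumes "g \<in> borel_measurable borel" "B \<in> sets borel"
  shows "(\<lambda>x. LINT y:B|lborel. g (x, y)) \<in> borel_measurable borel"
  unfolding set_lebesgue_integral_def
  using assms lborel.borel_measurable_lebesgue_integral by (simp add: lborel_prod[symmetric])

lemma set_integral_Times_inner_fst:
  fixes g :: "'a::euclidean_space \<times> 'b::euclidean_space \<Rightarrow> complex"
  assumes "compact A" "compact B" "bounded_measurable_on (A \<times> B) g"
    and "countable X" "G \<in> borel_measurable borel"
    and "\<And>y. y \<in> B \<Longrightarrow> y \<notin> X \<Longrightarrow> (LINT x:A|lborel. g (x, y)) = G y"
  shows "(LINT t:A \<times> B|lborel. g t) = (LINT y:B|lborel. G y)"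
  unfolding set_integral_Times_iterated(2)[OF assms(1-3)]
proof (rule set_lebesgue_integral_cong_AE)
  show "AE y\<in>B in lborel. (LINT x:A|lborel. g (x, y)) = G y"
    using AE_not_in[OF countable_imp_null_set_lborel[OF assms(4)]] by eventually_elim (use assms(6) in auto)
qed (use assms borel_measurable_set_integral_fst[of g A] in
       \<open>auto simp: bounded_measurable_on_def borel_closed compact_imp_closed\<close>)

lemma set_integral_Times_inner_snd:
  fixes g :: "'a::euclidean_space \<times> 'b::euclidean_space \<Rightarrow> complex"
  assumes "compact A" "compact B" "bounded_measurable_on (A \<times> B) g"
    and "countable X" "G \<in> borel_measurable borel"
    and "\<And>x. x \<in> A \<Longrightarrow> x \<notin> X \<Longrightarrow> (LINT y:B|lborel. g (x, y)) = G x"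
  shows "(LINT t:A \<times> B|lborel. g t) = (LINT x:A|lborel. G x)"
  unfolding set_integral_Times_iterated(1)[OF assms(1-3)]
proof (rule set_lebesgue_integral_cong_AE)
  show "AE x\<in>A in lborel. (LINT y:B|lborel. g (x, y)) = G x"
    using AE_not_in[OF countable_imp_null_set_lborel[OF assms(4)]] by eventually_elim (use assms(6) in auto)
qed (use assms borel_measurable_set_integral_snd[of g B] in
       \<open>auto simp: bounded_measurable_on_def borel_closed compact_imp_closed\<close>)

section \<open>Boundary behaviour of a rational inner function\<close>

lemma countable_cis_preimage: "countable {t::real. cis t = e}"
proof (cases "\<exists>t0. cis t0 = e")
  case True
  then obtain t0 where t0: "cis t0 = e" by blast
  have "{t::real. cis t = e} \<subseteq> range (\<lambda>k::int. t0 + 2 * pi * of_int k)"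
  proof
    fix t assume "t \<in> {t::real. cis t = e}"
    hence "exp (\<i> * complex_of_real t) = exp (\<i> * complex_of_real t0)"
      using t0 by (simp add: cis_conv_exp)
    then obtain k :: int where "\<i> * complex_of_real t = \<i> * complex_of_real t0 + of_int (2 * k) * pi * \<i>"
      unfolding exp_eq by blast
    hence "Im (\<i> * complex_of_real t) = Im (\<i> * complex_of_real t0 + of_int (2 * k) * pi * \<i>)"
      by simp
    hence "t = t0 + 2 * pi * of_int k" by simp
    thus "t \<in> range (\<lambda>k::int. t0 + 2 * pi * of_int k)" by blast
  qed
  thus ?thesis by (rule countable_subset) simp
qed simp

lemma countable_cis_preimage_finite:
  assumes "finite W"
  shows "countable {t::real. cis t \<in> W}"
proof -
  have "{t::real. cis t \<in> W} = (\<Union>w\<in>W. {t. cis t = w})" by auto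
  thus ?thesis using assms countable_cis_preimage by (simp add: countable_finite)
qed

lemma countable_cis_pair_preimage_finite:
  assumes "finite W"
  shows "countable {t::real \<times> real. (cis (fst t), cis (snd t)) \<in> W}"
proof -
  have "{t::real \<times> real. (cis (fst t), cis (snd t)) \<in> W} = (\<Union>w\<in>W. {t. cis t = fst w} \<times> {t. cis t = snd w})"
    by auto
  thus ?thesis using assms countable_cis_preimage by (simp add: countable_finite)
qed

lemma radial_tendsto: "((\<lambda>r. if norm a < 1 then a else complex_of_real r * a) \<longlongrightarrow> a) (at_left (1::real))"
proof (cases "norm a < 1")
  case False
  have "((\<lambda>r. complex_of_real r * a) \<longlongrightarrow> complex_of_real 1 * a) (at_left (1::real))"
    by (intro tendsto_intros)
  thus ?thesis using False by simp
qed simp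

locale rational_inner =
  fixes c :: "nat \<Rightarrow> nat \<Rightarrow> complex" and m n :: nat
  assumes bideg: "has_bidegree c m n"
    and no_zeros: "\<And>w1 w2. cmod w1 < 1 \<Longrightarrow> cmod w2 < 1 \<Longrightarrow> eval2 c m n w1 w2 \<noteq> 0"
    and ator: "atoral c m n"
begin

definition phi :: "complex \<Rightarrow> complex \<Rightarrow> complex" where
  "phi w1 w2 = eval2 (refl2 c m n) m n w1 w2 / eval2 c m n w1 w2"

definition torus_zeros :: "(complex \<times> complex) set" where
  "torus_zeros = {(x, y). cmod x = 1 \<and> cmod y = 1 \<and> eval2 c m n x y = 0}"

lemma finite_torus_zeros: "finite torus_zeros"
  unfolding torus_zeros_def by (rule finite_zeros_on_torus[OF bideg ator])

lemma eval2_nonzero_closed_bidisc: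
  assumes "cmod w1 \<le> 1" "cmod w2 \<le> 1" "(w1, w2) \<notin> torus_zeros"
  shows "eval2 c m n w1 w2 \<noteq> 0"
proof -
  consider "cmod w1 < 1" "cmod w2 < 1" | "cmod w1 < 1" "cmod w2 = 1" | "cmod w1 = 1" "cmod w2 < 1"
    | "cmod w1 = 1" "cmod w2 = 1"
    using assms(1,2) by fastforce
  thus ?thesis
  proof cases
    case 1
    thus ?thesis by (rule no_zeros)
  next
    case 2
    obtain w where "eval2 c m n w w2 \<noteq> 0"
      using eval2_not_identically_zero[OF bideg ator 2(2)] .
    thus ?thesis using eval2_nonzero_disc_times_circle[OF no_zeros 2(2) _ 2(1)] by blast
  next
    case 3
    obtain w where w: "eval2 (swap_coeffs c) n m w w1 \<noteq> 0"
      using eval2_not_identically_zero[OF has_bidegree_swap_coeffs[OF bideg]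
          atoral_swap_coeffs[OF ator] 3(1)] .
    have "eval2 (swap_coeffs c) n m u v \<noteq> 0" if "cmod u < 1" "cmod v < 1" for u v
      using no_zeros[OF that(2,1)] by (simp add: eval2_swap_coeffs)
    from eval2_nonzero_disc_times_circle[OF this 3(1) w 3(2)] show ?thesis
      by (simp add: eval2_swap_coeffs)
  next
    case 4
    thus ?thesis using assms(3) by (simp add: torus_zeros_def)
  qed
qed

lemma norm_phi_torus:
  assumes "cmod x = 1" "cmod y = 1"
  shows "cmod (phi x y) \<le> 1" and "(x, y) \<notin> torus_zeros \<Longrightarrow> cmod (phi x y) = 1"
  using eval2_refl2_torus[OF assms, of c m n] assms
  by (auto simp: phi_def torus_zeros_def norm_mult norm_power norm_divide divide_le_eq_1)

lemma bval_phi: "eval2 c m n w1 w2 \<noteq> 0 \<Longrightarrow> bval phi w1 w2 = phi w1 w2"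
  unfolding bval_def phi_def
  by (rule tendsto_Lim[OF trivial_limit_at_left_real]) (intro tendsto_intros radial_tendsto)

lemma continuous_on_phi:
  "continuous_on S f \<Longrightarrow> continuous_on S g \<Longrightarrow> (\<And>t. t \<in> S \<Longrightarrow> eval2 c m n (f t) (g t) \<noteq> 0) \<Longrightarrow>
    continuous_on S (\<lambda>t. phi (f t) (g t))"
  unfolding phi_def by (intro continuous_intros) auto

lemma borel_measurable_phi_torus: "(\<lambda>t::real \<times> real. phi (cis (fst t)) (cis (snd t))) \<in> borel_measurable borel"
  unfolding phi_def
  by (intro borel_measurable_divide borel_measurable_continuous_onI continuous_intros)

lemma phi_regular_fst:
  assumes "cmod w \<le> 1" "\<And>x. (x, w) \<notin> torus_zeros"
  shows "(\<lambda>x. phi x w) holomorphic_on ball 0 1" "continuous_on (cball 0 1) (\<lambda>x. phi x w)"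
  using eval2_nonzero_closed_bidisc assms unfolding phi_def
  by (auto intro!: holomorphic_intros continuous_intros)

lemma phi_regular_snd:
  assumes "cmod w \<le> 1" "\<And>y. (w, y) \<notin> torus_zeros"
  shows "(\<lambda>y. phi w y) holomorphic_on ball 0 1" "continuous_on (cball 0 1) (\<lambda>y. phi w y)"
  using eval2_nonzero_closed_bidisc assms unfolding phi_def
  by (auto intro!: holomorphic_intros continuous_intros)

lemma not_in_torus_zeros: "cmod x \<noteq> 1 \<or> cmod y \<noteq> 1 \<Longrightarrow> (x, y) \<notin> torus_zeros"
  by (auto simp: torus_zeros_def)

end

section \<open>The local Dirichlet integral at an interior point\<close>

abbreviation period_square :: "(real \<times> real) set" where
  "period_square \<equiv> {0..2*pi} \<times> {0..2*pi}"

lemma compact_period_square: "compact period_square"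
  by (intro compact_Times compact_Icc)

text \<open>With \<open>e = d - b - c + a\<close> and \<open>|d| = 1\<close>: the first two brackets vanish after integrating in
  \<open>\<eta>\<^sub>1\<close> resp. \<open>\<eta>\<^sub>2\<close> against the Poisson kernel, the last one after integrating in either variable.\<close>

lemma dirichlet_integrand_decomposition:
  fixes a b c d :: complex
  assumes "d * cnj d = 1"
  defines "e \<equiv> d - b - c + a"
  shows "e * cnj e - (1 - c * cnj c - b * cnj b + a * cnj a) =
    ((b - a) * cnj (b - d) - e * cnj (b - a)) + ((c - a) * cnj (c - d) - e * cnj (c - a))
    - (e * cnj a + a * cnj e)"
  unfolding e_def assms(1)[symmetric] by (simp add: algebra_simps)

locale rational_inner_point = rational_inner +
  fixes z1 z2 :: complex
  assumes z1: "cmod z1 < 1" and z2: "cmod z2 < 1"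
begin

definition "a = phi z1 z2"
definition "B y = phi z1 (cis y)"
definition "C x = phi (cis x) z2"
definition "D t = phi (cis (fst t)) (cis (snd t))"
definition "E t = D t - B (snd t) - C (fst t) + a"
definition "K t = poisson_weight z1 (fst t) * poisson_weight z2 (snd t)"

definition "Phi1 t = (B (snd t) - a) * cnj (B (snd t) - D t) - E t * cnj (B (snd t) - a)"
definition "Phi2 t = (C (fst t) - a) * cnj (C (fst t) - D t) - E t * cnj (C (fst t) - a)"
definition "Psi t = E t * cnj a + a * cnj (E t)"

definition "Xb = {y. cis y \<in> snd ` torus_zeros}"
definition "Xc = {x. cis x \<in> fst ` torus_zeros}"
definition "Xd = {t. (cis (fst t), cis (snd t)) \<in> torus_zeros}"

lemma countable_Xb: "countable Xb"
  unfolding Xb_def by (intro countable_cis_preimage_finite finite_imageI finite_torus_zeros)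

lemma countable_Xc: "countable Xc"
  unfolding Xc_def by (intro countable_cis_preimage_finite finite_imageI finite_torus_zeros)

lemma countable_Xd: "countable Xd"
  unfolding Xd_def by (intro countable_cis_pair_preimage_finite finite_torus_zeros)

lemma continuous_on_B [continuous_intros]: "continuous_on S f \<Longrightarrow> continuous_on S (\<lambda>x. B (f x))"
  unfolding B_def using eval2_nonzero_closed_bidisc not_in_torus_zeros z1
  by (intro continuous_on_phi continuous_intros) auto

lemma continuous_on_C [continuous_intros]: "continuous_on S f \<Longrightarrow> continuous_on S (\<lambda>x. C (f x))"
  unfolding C_def using eval2_nonzero_closed_bidisc not_in_torus_zeros z2
  by (intro continuous_on_phi continuous_intros) auto

lemma bounded_measurable_on_D: "bounded_measurable_on S D"
  unfolding bounded_measurable_on_def bounded_iff D_def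
  using borel_measurable_phi_torus by (auto intro!: exI[of _ 1] norm_phi_torus(1))

lemma bounded_measurable_on_K: "bounded_measurable_on period_square K"
  unfolding K_def using z1 z2
  by (intro bounded_measurable_on_continuous continuous_intros compact_period_square) auto

lemma bounded_measurable_on_E: "bounded_measurable_on period_square E"
  unfolding E_def using z1 z2
  by (intro bounded_measurable_on_add bounded_measurable_on_diff bounded_measurable_on_D
      bounded_measurable_on_continuous continuous_intros compact_period_square)

lemmas bounded_measurable_on_intros = bounded_measurable_on_add bounded_measurable_on_diff
  bounded_measurable_on_mult bounded_measurable_on_cnj bounded_measurable_on_D
  bounded_measurable_on_E bounded_measurable_on_K bounded_measurable_on_continuous

lemma set_integral_K_null_fst:
  assumes "bounded_measurable_on period_square h"
    and "\<And>y. y \<notin> Xb \<Longrightarrow> (LINT x:{0..2*pi}|lborel. poisson_weight z1 x * h (x, y)) = 0"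
  shows "(LINT t:period_square|lborel. K t * h t) = 0"
proof -
  have "(LINT t:period_square|lborel. K t * h t) = (LINT y:{0..2*pi}|lborel. 0)"
  proof (rule set_integral_Times_inner_fst[OF compact_Icc compact_Icc _ countable_Xb])
    fix y assume "y \<notin> Xb"
    have "(LINT x:{0..2*pi}|lborel. K (x, y) * h (x, y))
        = poisson_weight z2 y * (LINT x:{0..2*pi}|lborel. poisson_weight z1 x * h (x, y))"
      by (simp add: K_def mult_ac flip: set_integral_mult_right)
    thus "(LINT x:{0..2*pi}|lborel. K (x, y) * h (x, y)) = 0" using assms(2) \<open>y \<notin> Xb\<close> by simp
  qed (use assms(1) in \<open>auto intro: bounded_measurable_on_mult bounded_measurable_on_K\<close>)
  thus ?thesis by simp
qed

lemma set_integral_K_null_snd: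
  assumes "bounded_measurable_on period_square h"
    and "\<And>x. x \<notin> Xc \<Longrightarrow> (LINT y:{0..2*pi}|lborel. poisson_weight z2 y * h (x, y)) = 0"
  shows "(LINT t:period_square|lborel. K t * h t) = 0"
proof -
  have "(LINT t:period_square|lborel. K t * h t) = (LINT x:{0..2*pi}|lborel. 0)"
  proof (rule set_integral_Times_inner_snd[OF compact_Icc compact_Icc _ countable_Xc])
    fix x assume "x \<notin> Xc"
    have "(LINT y:{0..2*pi}|lborel. K (x, y) * h (x, y))
        = poisson_weight z1 x * (LINT y:{0..2*pi}|lborel. poisson_weight z2 y * h (x, y))"
      by (simp add: K_def mult_ac flip: set_integral_mult_right)
    thus "(LINT y:{0..2*pi}|lborel. K (x, y) * h (x, y)) = 0" using assms(2) \<open>x \<notin> Xc\<close> by simp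
  qed (use assms(1) in \<open>auto intro: bounded_measurable_on_mult bounded_measurable_on_K\<close>)
  thus ?thesis by simp
qed

lemma phi_regular_Xb:
  assumes "y \<notin> Xb"
  shows "(\<lambda>x. phi x (cis y)) holomorphic_on ball 0 1" "continuous_on (cball 0 1) (\<lambda>x. phi x (cis y))"
  using assms by (intro phi_regular_fst; force simp: Xb_def)+

lemma phi_regular_Xc:
  assumes "x \<notin> Xc"
  shows "(\<lambda>y. phi (cis x) y) holomorphic_on ball 0 1" "continuous_on (cball 0 1) (\<lambda>y. phi (cis x) y)"
  using assms by (intro phi_regular_snd; force simp: Xc_def)+

lemma phi_regular_z1: "(\<lambda>y. phi z1 y) holomorphic_on ball 0 1" "continuous_on (cball 0 1) (\<lambda>y. phi z1 y)"
  using z1 not_in_torus_zeros by (intro phi_regular_snd; simp)+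

lemma phi_regular_z2: "(\<lambda>x. phi x z2) holomorphic_on ball 0 1" "continuous_on (cball 0 1) (\<lambda>x. phi x z2)"
  using z2 not_in_torus_zeros by (intro phi_regular_fst; simp)+

lemma set_integral_K_Phi1: "(LINT t:period_square|lborel. K t * Phi1 t) = 0"
proof (rule set_integral_K_null_fst)
  fix y assume y: "y \<notin> Xb"
  let ?F = "\<lambda>u. - (phi u (cis y) - B y - phi u z2 + a) * cnj (B y - a)"
  let ?G = "\<lambda>u. cnj (B y - a) * (B y - phi u (cis y))"
  have "(LINT x:{0..2*pi}|lborel. poisson_weight z1 x * (?F (cis x) + cnj (?G (cis x))))
      = poisson_mass z1 * (?F z1 + cnj (?G z1))"
    using phi_regular_Xb[OF y] phi_regular_z2 z1
    by (intro Poisson_integral_formula_harmonic) (auto intro!: holomorphic_intros continuous_intros)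
  thus "(LINT x:{0..2*pi}|lborel. poisson_weight z1 x * Phi1 (x, y)) = 0"
    by (simp add: Phi1_def E_def D_def C_def B_def a_def algebra_simps)
qed (unfold Phi1_def, use z1 z2 in \<open>intro bounded_measurable_on_intros continuous_intros
  compact_period_square; auto\<close>)

lemma set_integral_K_Phi2: "(LINT t:period_square|lborel. K t * Phi2 t) = 0"
proof (rule set_integral_K_null_snd)
  fix x assume x: "x \<notin> Xc"
  let ?F = "\<lambda>u. - (phi (cis x) u - phi z1 u - C x + a) * cnj (C x - a)"
  let ?G = "\<lambda>u. cnj (C x - a) * (C x - phi (cis x) u)"
  have "(LINT y:{0..2*pi}|lborel. poisson_weight z2 y * (?F (cis y) + cnj (?G (cis y))))
      = poisson_mass z2 * (?F z2 + cnj (?G z2))"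
    using phi_regular_Xc[OF x] phi_regular_z1 z2
    by (intro Poisson_integral_formula_harmonic) (auto intro!: holomorphic_intros continuous_intros)
  thus "(LINT y:{0..2*pi}|lborel. poisson_weight z2 y * Phi2 (x, y)) = 0"
    by (simp add: Phi2_def E_def D_def C_def B_def a_def algebra_simps)
qed (unfold Phi2_def, use z1 z2 in \<open>intro bounded_measurable_on_intros continuous_intros
  compact_period_square; auto\<close>)

lemma set_integral_K_Psi: "(LINT t:period_square|lborel. K t * Psi t) = 0"
proof (rule set_integral_K_null_fst)
  fix y assume y: "y \<notin> Xb"
  let ?F = "\<lambda>u. (phi u (cis y) - B y - phi u z2 + a) * cnj a"
  let ?G = "\<lambda>u. cnj a * (phi u (cis y) - B y - phi u z2 + a)"
  have "(LINT x:{0..2*pi}|lborel. poisson_weight z1 x * (?F (cis x) + cnj (?G (cis x))))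
      = poisson_mass z1 * (?F z1 + cnj (?G z1))"
    using phi_regular_Xb[OF y] phi_regular_z2 z1
    by (intro Poisson_integral_formula_harmonic) (auto intro!: holomorphic_intros continuous_intros)
  thus "(LINT x:{0..2*pi}|lborel. poisson_weight z1 x * Psi (x, y)) = 0"
    by (simp add: Psi_def E_def D_def C_def B_def a_def algebra_simps)
qed (unfold Psi_def, use z1 z2 in \<open>intro bounded_measurable_on_intros continuous_intros
  compact_period_square; auto\<close>)

lemma D_unimodular: "t \<notin> Xd \<Longrightarrow> D t * cnj (D t) = 1"
  unfolding D_def Xd_def using norm_phi_torus(2)[of "cis (fst t)" "cis (snd t)"]
  by (simp add: complex_norm_square[symmetric])

lemma set_integral_K_dirichlet_integrands:
  "(LINT t:period_square|lborel. K t * (E t * cnj (E t))) =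
   (LINT t:period_square|lborel. K t * (1 - C (fst t) * cnj (C (fst t)) - B (snd t) * cnj (B (snd t)) + a * cnj a))"
  (is "(LINT t:_|_. ?L t) = (LINT t:_|_. ?R t)")
proof -
  have bm: "bounded_measurable_on period_square ?L" "bounded_measurable_on period_square ?R"
    "bounded_measurable_on period_square (\<lambda>t. K t * Phi1 t)" "bounded_measurable_on period_square (\<lambda>t. K t * Phi2 t)"
    "bounded_measurable_on period_square (\<lambda>t. K t * Psi t)"
    unfolding Phi1_def Phi2_def Psi_def using z1 z2
    by (intro bounded_measurable_on_intros continuous_intros compact_period_square; auto)+
  note int = set_integrable_bounded_measurable_on[OF compact_period_square]
  have "(LINT t:period_square|lborel. ?L t) - (LINT t:period_square|lborel. ?R t)
      = (LINT t:period_square|lborel. ?L t - ?R t)"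
    using int[OF bm(1)] int[OF bm(2)] by (rule set_integral_diff(2)[symmetric])
  also have "\<dots> = (LINT t:period_square|lborel. K t * Phi1 t + K t * Phi2 t - K t * Psi t)"
  proof (rule set_lebesgue_integral_cong_AE)
    show "AE t\<in>period_square in lborel. ?L t - ?R t = K t * Phi1 t + K t * Phi2 t - K t * Psi t"
      using AE_not_in[OF countable_imp_null_set_lborel[OF countable_Xd]]
    proof eventually_elim
      case (elim t)
      show ?case
        using dirichlet_integrand_decomposition[OF D_unimodular[OF elim], of "B (snd t)" "C (fst t)" a]
        unfolding Phi1_def Phi2_def Psi_def E_def by (simp add: algebra_simps)
    qed
  qed (use bm borel_compact[OF compact_period_square] in \<open>auto simp: bounded_measurable_on_def\<close>)
  also have "\<dots> = 0"
    using int[OF bm(3)] int[OF bm(4)] int[OF bm(5)]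
    by (simp add: set_integral_K_Phi1 set_integral_K_Phi2 set_integral_K_Psi)
  finally show ?thesis by simp
qed

lemma bval_phi_point:
  "bval phi z1 z2 = a" "bval phi z1 (cis y) = B y" "bval phi (cis x) z2 = C x"
  "t \<notin> Xd \<Longrightarrow> bval phi (cis (fst t)) (cis (snd t)) = D t"
  using z1 z2 unfolding a_def B_def C_def D_def Xd_def
  by (intro bval_phi eval2_nonzero_closed_bidisc; simp add: not_in_torus_zeros)+

lemma local_dirichlet_integral_phi:
  "(LINT t:period_square|lborel.
      (let e1 = cis (fst t); e2 = cis (snd t) in
        (cmod (bval phi z1 z2 - bval phi z1 e2 - bval phi e1 z2 + bval phi e1 e2))\<^sup>2
        / ((cmod (z1 - e1))\<^sup>2 * (cmod (z2 - e2))\<^sup>2))) =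
   (LINT t:period_square|lborel.
      (let e1 = cis (fst t); e2 = cis (snd t) in
        (1 - (cmod (bval phi e1 z2))\<^sup>2 - (cmod (bval phi z1 e2))\<^sup>2 + (cmod (phi z1 z2))\<^sup>2)
        / ((cmod (e1 - z1))\<^sup>2 * (cmod (e2 - z2))\<^sup>2)))"
  (is "(LINT t:_|_. ?FL t) = (LINT t:_|_. ?FR t)")
proof -
  have K: "complex_of_real (X / ((cmod (cis (fst t) - z1))\<^sup>2 * (cmod (cis (snd t) - z2))\<^sup>2))
      = K t * complex_of_real X" for X t
    by (simp add: K_def poisson_weight_def)
  have FL: "complex_of_real (?FL t) = K t * (E t * cnj (E t))" if "t \<notin> Xd" for t
  proof -
    have "a - B (snd t) - C (fst t) + D t = E t" by (simp add: E_def algebra_simps)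
    hence "?FL t = (cmod (E t))\<^sup>2 / ((cmod (cis (fst t) - z1))\<^sup>2 * (cmod (cis (snd t) - z2))\<^sup>2)"
      unfolding Let_def bval_phi_point(1-3) bval_phi_point(4)[OF that] by (simp add: norm_minus_commute)
    hence "complex_of_real (?FL t) = K t * complex_of_real ((cmod (E t))\<^sup>2)" by (simp only: K)
    thus ?thesis by (simp only: complex_norm_square)
  qed
  have FR: "complex_of_real (?FR t) =
      K t * (1 - C (fst t) * cnj (C (fst t)) - B (snd t) * cnj (B (snd t)) + a * cnj a)" for t
    unfolding Let_def bval_phi_point(2,3) a_def[symmetric] K
    by (simp only: of_real_add of_real_diff of_real_1 complex_norm_square)
  have bm: "bounded_measurable_on period_square (\<lambda>t. K t * (E t * cnj (E t)))"
    by (intro bounded_measurable_on_intros)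
  hence bmK: "(\<lambda>t. K t * (E t * cnj (E t))) \<in> borel_measurable borel"
    by (simp add: bounded_measurable_on_def)
  have "(\<lambda>t. complex_of_real (?FL t)) \<in> borel_measurable borel"
    by (rule measurable_discrete_difference[OF bmK countable_Xd]) (simp_all add: FL)
  hence FL_int: "complex_of_real (LINT t:period_square|lborel. ?FL t)
      = (LINT t:period_square|lborel. K t * (E t * cnj (E t)))"
    unfolding set_integral_complex_of_real[symmetric]
  proof (intro set_lebesgue_integral_cong_AE)
    show "AE t\<in>period_square in lborel. complex_of_real (?FL t) = K t * (E t * cnj (E t))"
      using AE_not_in[OF countable_imp_null_set_lborel[OF countable_Xd]] by eventually_elim (simp add: FL)
  qed (use bmK borel_compact[OF compact_period_square] in auto)
  have FR_int: "complex_of_real (LINT t:period_square|lborel. ?FR t)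
      = (LINT t:period_square|lborel. K t * (1 - C (fst t) * cnj (C (fst t)) - B (snd t) * cnj (B (snd t)) + a * cnj a))"
    unfolding set_integral_complex_of_real[symmetric] FR ..
  have "complex_of_real (LINT t:period_square|lborel. ?FL t) = complex_of_real (LINT t:period_square|lborel. ?FR t)"
    unfolding FL_int FR_int by (rule set_integral_K_dirichlet_integrands)
  thus ?thesis by (simp only: of_real_eq_iff)
qed

end

theorem lemma8p2:
  fixes c :: "nat \<Rightarrow> nat \<Rightarrow> complex" and m n :: nat and z1 z2 :: complex
  assumes bideg: "has_bidegree c m n"
    and nozeros: "\<forall>w1 w2. norm w1 < 1 \<longrightarrow> norm w2 < 1 \<longrightarrow> eval2 c m n w1 w2 \<noteq> 0"
    and ator: "atoral c m n"
    and z1: "norm z1 < 1" and z2: "norm z2 < 1"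
  defines "\<phi> \<equiv> (\<lambda>w1 w2. eval2 (refl2 c m n) m n w1 w2 / eval2 c m n w1 w2)"
  shows "local_dirichlet \<phi> z1 z2 =
    1 / (4 * pi ^ 2) *
     (LINT t:{0..2*pi} \<times> {0..2*pi}|lborel.
        (let e1 = cis (fst t); e2 = cis (snd t) in
          (1 - (cmod (bval \<phi> e1 z2))\<^sup>2 - (cmod (bval \<phi> z1 e2))\<^sup>2 + (cmod (\<phi> z1 z2))\<^sup>2)
          / ((cmod (e1 - z1))\<^sup>2 * (cmod (e2 - z2))\<^sup>2)))"
proof -
  interpret rational_inner_point c m n z1 z2
    using assms by unfold_locales auto
  have "\<phi> = phi" unfolding \<phi>_def phi_def by (simp add: fun_eq_iff)
  thus ?thesis unfolding local_dirichlet_def using local_dirichlet_integral_phi by simp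
qed

end
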